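(* Let $d\in\mathbb{N}$. For every $\alpha\in[0,d)$ there exists a non-empty compact set $K\subset\mathbb{R}^d$ with $\dim_{\mathrm{A}} K=\alpha$ such that every microset $E\in\mathcal{G}_K$ satisfies $\dim_{\mathrm{ML}} E=0$.
   Context: $B(x,r)$ denotes the closed ball of centre $x$ and radius $r$, and $N_r(F)$ denotes the minimal number of closed balls of radius $r$ centred in $F$ needed to cover $F$. For a non-empty compact $K\subset\mathbb{R}^d$, a miniset of $K$ is a non-empty compact set of the form $\lambda(K-x)\cap B(0,1)$ with $x\in K$ and $\lambda\geq1$; a microset of $K$ is any limit, in the Hausdorff metric, of a sequence of minisets of $K$; $\mathcal{G}_K$ denotes the set of microsets of $K$. The Assouad dimension is $\dim_{\mathrm{A}} K=\inf\{\alpha>0:\exists C>0\ \forall 0<r\leq R<1\ \forall x\in K,\ N_r(B(x,R)\cap K)\leq C(R/r)^\alpha\}$. The lower dimension of a non-empty set $F$ is $\dim_{\mathrm{L}} F=\sup\{\alpha>0:\exists C>0\ \forall 0<r\leq R<1\ \forall x\in F,\ N_r(B(x,R)\cap F)\geq C(R/r)^\alpha\}$ (with $\sup\varnothing=0$). The modified lower dimension is $\dim_{\mathrm{ML}} E=\sup\{\dim_{\mathrm{L}} F:\varnothing\neq F\subset E\}$. *)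

theory Defs
  imports "HOL-Analysis.Analysis"
begin

definition covnum :: "real \<Rightarrow> 'a::metric_space set \<Rightarrow> nat" where
  "covnum r F = Inf {card C | C. finite C \<and> C \<subseteq> F \<and> F \<subseteq> (\<Union>c\<in>C. cball c r)}"

definition assouad_dim :: "'a::metric_space set \<Rightarrow> real" where
  "assouad_dim K = Inf {\<alpha>. \<alpha> > 0 \<and> (\<exists>C>0. \<forall>r R x. 0 < r \<and> r \<le> R \<and> R < 1 \<and> x \<in> K \<longrightarrow>
        real (covnum r (cball x R \<inter> K)) \<le> C * (R / r) powr \<alpha>)}"

definition lower_dim :: "'a::metric_space set \<Rightarrow> real" where
  "lower_dim F = (let S = {\<alpha>. \<alpha> > 0 \<and> (\<exists>C>0. \<forall>r R x. 0 < r \<and> r \<le> R \<and> R < 1 \<and> x \<in> F \<longrightarrow>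
        real (covnum r (cball x R \<inter> F)) \<ge> C * (R / r) powr \<alpha>)} in
     if S = {} then 0 else Sup S)"

definition mod_lower_dim :: "'a::metric_space set \<Rightarrow> real" where
  "mod_lower_dim E = Sup {lower_dim F | F. F \<noteq> {} \<and> F \<subseteq> E}"

definition minisets :: "'a::real_normed_vector set \<Rightarrow> 'a set set" where
  "minisets K = {(\<lambda>v. t *\<^sub>R (v - x)) ` K \<inter> cball 0 1 | x t. x \<in> K \<and> t \<ge> 1}"

definition hausdorff_dist :: "'a::metric_space set \<Rightarrow> 'a set \<Rightarrow> real" where
  "hausdorff_dist A B = max (SUP a\<in>A. infdist a B) (SUP b\<in>B. infdist b A)"

definition microsets :: "'a::real_normed_vector set \<Rightarrow> 'a set set" where
  "microsets K = {E. compact E \<and> E \<noteq> {} \<and> (\<exists>S. (\<forall>n. S n \<in> minisets K) \<and>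
        (\<lambda>n. hausdorff_dist (S n) E) \<longlonglongrightarrow> 0)}"

end

theory Submission
  imports Defs
begin

(*
  Take K = C^d, where C is the Cantor set in [0, 1] in which each generation-n interval, of
  length len n = 2^(-n/a) * exp (w * s n / a) with s the binary digit sum and
  w = (1 - a) ln 2 / 2, keeps the two generation-(n+1) subintervals at its ends.

  Since s is subadditive and only logarithmic, the 2^m generation-(n+m) intervals inside a
  generation-n interval satisfy 2^m = (len n / len (n+m))^a * exp (o(m)) uniformly in n; counting
  cubes of these generations gives dim_A K = a d.

  Whenever 2^t divides n + 1, however, s drops by t - 1 at n + 1, so len (n+1) / len n is at most
  exp (- w (t-1) / a): the gap between sibling intervals then dwarfs the intervals themselves.
  Such levels occur in every window of 2^t generations, so around every point of K and at every
  scale there is an empty annulus of any prescribed ratio L with outer radius comparable to the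
  scale. Empty annuli survive rescaling and Hausdorff limits, hence every microset E has, at each
  of its points, empty annuli of every ratio L below radius 1/2; covering a ball of radius R/2 by
  the single ball of radius R/L then shows dim_L F = 0 for every non-empty F contained in E.
  For alpha = 0 the singleton {0} works.
*)

section \<open>Binary digit sums\<close>

fun bitsum :: "nat \<Rightarrow> nat" where
  "bitsum n = (if n = 0 then 0 else n mod 2 + bitsum (n div 2))"

declare bitsum.simps [simp del]

lemma bitsum_eq: "bitsum n = n mod 2 + bitsum (n div 2)"
  by (cases "n = 0") (simp_all add: bitsum.simps[of n] bitsum.simps[of 0])

lemma bitsum_0 [simp]: "bitsum 0 = 0"
  by (simp add: bitsum.simps)

lemma bitsum_double [simp]: "bitsum (2 * n) = bitsum n"
  by (subst bitsum_eq) simp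

lemma bitsum_double_Suc [simp]: "bitsum (Suc (2 * n)) = Suc (bitsum n)"
  by (subst bitsum_eq) simp

lemma bitsum_Suc_le: "bitsum (Suc n) \<le> Suc (bitsum n)"
proof (induction n rule: less_induct)
  case (less n)
  show ?case
  proof (cases "even n")
    case True
    then show ?thesis by (auto elim!: evenE)
  next
    case False
    then obtain m where m: "n = Suc (2 * m)" by (metis oddE Suc_eq_plus1)
    then have "m < n" by simp
    have "Suc n = 2 * Suc m" using m by simp
    then have "bitsum (Suc n) = bitsum (Suc m)" by (simp only: bitsum_double)
    also have "\<dots> \<le> Suc (bitsum m)" using less \<open>m < n\<close> by blast
    finally show ?thesis using m by simp
  qed
qed

lemma bitsum_add_le: "bitsum (m + n) \<le> bitsum m + bitsum n"
proof (induction "m + n" arbitrary: m n rule: less_induct)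
  case less
  show ?case
  proof (cases "m + n = 0")
    case False
    define carry where "carry = m mod 2 * (n mod 2)"
    have carry: "(m + n) div 2 = (m div 2 + n div 2) + carry"
      "(m + n) mod 2 + carry \<le> m mod 2 + n mod 2"
      unfolding carry_def by (cases "even m"; cases "even n"; auto elim!: evenE oddE)+
    have IH: "bitsum (m div 2 + n div 2) \<le> bitsum (m div 2) + bitsum (n div 2)"
      using False by (intro less) auto
    have "bitsum ((m + n) div 2) \<le> bitsum (m div 2 + n div 2) + carry"
      using bitsum_Suc_le[of "m div 2 + n div 2"] unfolding carry(1) carry_def
      by (auto simp: mod2_eq_if)
    then show ?thesis
      using IH carry(2) bitsum_eq[of "m + n"] bitsum_eq[of m] bitsum_eq[of n] by linarith
  qed simp
qed

lemma two_pow_bitsum_le: "2 ^ bitsum n \<le> Suc n"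
proof (induction n rule: less_induct)
  case (less n)
  show ?case
  proof (cases "n = 0")
    case False
    have IH: "2 ^ bitsum (n div 2) \<le> Suc (n div 2)" using False by (intro less) auto
    have "(2::nat) ^ bitsum n = 2 ^ (n mod 2) * 2 ^ bitsum (n div 2)"
      by (subst bitsum_eq) (simp add: power_add)
    also have "\<dots> \<le> 2 ^ (n mod 2) * Suc (n div 2)" by (rule mult_le_mono2[OF IH])
    also have "\<dots> \<le> Suc n" by (cases "even n") (auto elim!: evenE oddE)
    finally show ?thesis .
  qed simp
qed

lemma bitsum_sublinear:
  assumes "0 < \<epsilon>"
  obtains M where "\<And>w. real (bitsum w) \<le> M + \<epsilon> * real w"
proof
  fix w
  define \<eta> where "\<eta> = \<epsilon> * ln 2"
  have \<eta>: "0 < \<eta>" using assms by (simp add: \<eta>_def)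
  have "(2::real) ^ bitsum w \<le> real w + 1"
    using two_pow_bitsum_le[of w] by (metis of_nat_Suc of_nat_le_iff of_nat_numeral of_nat_power add.commute)
  then have "real (bitsum w) * ln 2 \<le> ln (real w + 1)"
    by (metis ln_realpow ln_le_cancel_iff zero_less_numeral zero_less_power le_less_trans not_le)
  moreover have "ln \<eta> + ln (real w + 1) \<le> \<eta> * (real w + 1) - 1"
    using ln_le_minus_one[of "\<eta> * (real w + 1)"] \<eta> by (simp add: ln_mult)
  moreover have "(\<epsilon> * (real w + 1) - (1 + ln \<eta>) / ln 2) * ln 2 = \<eta> * (real w + 1) - 1 - ln \<eta>"
    by (simp add: \<eta>_def field_simps)
  ultimately have "real (bitsum w) * ln 2 \<le> (\<epsilon> * (real w + 1) - (1 + ln \<eta>) / ln 2) * ln 2"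
    by linarith
  then have "real (bitsum w) \<le> \<epsilon> * (real w + 1) - (1 + ln \<eta>) / ln 2"
    by (simp add: mult_le_cancel_right_pos)
  then show "real (bitsum w) \<le> (\<epsilon> - (1 + ln \<eta>) / ln 2) + \<epsilon> * real w"
    by (simp add: algebra_simps)
qed

lemma bitsum_Suc_if_dvd: "2 ^ t dvd Suc n \<Longrightarrow> bitsum (Suc n) + t \<le> Suc (bitsum n)"
proof (induction t arbitrary: n)
  case 0
  then show ?case using bitsum_Suc_le[of n] by simp
next
  case (Suc t)
  then obtain k where k: "Suc n = 2 * (2 ^ t * k)" by (elim dvdE) simp
  then obtain w where "2 ^ t * k = Suc w" by (cases "2 ^ t * k") auto
  then have w: "Suc n = 2 * Suc w" "2 ^ t dvd Suc w" using k by (simp, metis dvd_triv_left)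
  then have "n = Suc (2 * w)" by simp
  then show ?case using Suc.IH[OF w(2)] w(1) by (simp only: bitsum_double bitsum_double_Suc)
qed

lemma bitsum_Suc_if_not_dvd: "\<not> 2 ^ t dvd Suc n \<Longrightarrow> bitsum n + 2 \<le> bitsum (Suc n) + t"
proof (induction t arbitrary: n)
  case (Suc t)
  show ?case
  proof (cases "even n")
    case True
    then show ?thesis by (auto elim!: evenE)
  next
    case False
    then obtain w where w: "n = Suc (2 * w)" by (metis oddE Suc_eq_plus1)
    then have "Suc n = 2 * Suc w" by simp
    moreover have "\<not> 2 ^ t dvd Suc w"
    proof
      assume "2 ^ t dvd Suc w"
      then have "2 * 2 ^ t dvd 2 * Suc w" by (rule mult_dvd_mono[OF dvd_refl])
      with Suc.prems \<open>Suc n = 2 * Suc w\<close> show False by (metis power_Suc)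
    qed
    ultimately show ?thesis using Suc.IH[of w] w by (simp only: bitsum_double bitsum_double_Suc) simp
  qed
qed simp

lemma obtain_next_Suc_multiple:
  assumes "0 < k"
  obtains j where "n \<le> j" "j < n + k" "k dvd Suc j" "\<And>i. n \<le> i \<Longrightarrow> i < j \<Longrightarrow> \<not> k dvd Suc i"
proof -
  define j0 where "j0 = n + (k - Suc (n mod k))"
  have j0: "n \<le> j0 \<and> k dvd Suc j0"
  proof -
    obtain q r where "n = k * q + r" "r < k" "n mod k = r"
      using div_mult_mod_eq[of n k] mod_less_divisor[OF assms] by (metis mult.commute)
    then have "Suc j0 = k * Suc q" unfolding j0_def by simp
    then show ?thesis unfolding j0_def by simp
  qed
  define j where "j = (LEAST j. n \<le> j \<and> k dvd Suc j)"
  have "n \<le> j \<and> k dvd Suc j" unfolding j_def using j0 by (rule LeastI)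
  moreover have "j \<le> j0" unfolding j_def using j0 by (rule Least_le)
  moreover have "j0 < n + k" using assms unfolding j0_def by simp
  moreover have "\<not> k dvd Suc i" if "n \<le> i" "i < j" for i
    using not_less_Least[of i "\<lambda>j. n \<le> j \<and> k dvd Suc j"] that unfolding j_def by blast
  ultimately show ?thesis using that by auto
qed

section \<open>Covering numbers and dimensions\<close>

definition separated :: "real \<Rightarrow> 'a::metric_space set \<Rightarrow> bool" where
  "separated \<delta> S \<longleftrightarrow> (\<forall>p\<in>S. \<forall>q\<in>S. p \<noteq> q \<longrightarrow> \<delta> \<le> dist p q)"

lemma covnum_le_card:
  assumes "finite C" "C \<subseteq> A" "A \<subseteq> (\<Union>c\<in>C. cball c r)"
  shows "covnum r A \<le> card C"
  unfolding covnum_def using assms by (intro cInf_lower bdd_below_bot) blast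

lemma covnum_le_card_half_radius:
  fixes A :: "'a::metric_space set"
  assumes "finite D" "A \<subseteq> (\<Union>c\<in>D. cball c (r/2))"
  shows "covnum r A \<le> card D"
proof -
  define D' where "D' = {c\<in>D. cball c (r/2) \<inter> A \<noteq> {}}"
  have "\<forall>c\<in>D'. \<exists>y. y \<in> cball c (r/2) \<inter> A" unfolding D'_def by blast
  then obtain g where g: "\<And>c. c \<in> D' \<Longrightarrow> g c \<in> cball c (r/2) \<inter> A" by metis
  have "A \<subseteq> (\<Union>y\<in>g ` D'. cball y r)"
  proof
    fix z assume "z \<in> A"
    then obtain c where c: "c \<in> D" "dist c z \<le> r/2" using assms(2) by auto
    then have "c \<in> D'" using \<open>z \<in> A\<close> unfolding D'_def by auto
    have "dist (g c) z \<le> dist (g c) c + dist c z" by (rule dist_triangle)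
    also have "\<dots> \<le> r" using g[OF \<open>c \<in> D'\<close>] c(2) by (simp add: dist_commute)
    finally show "z \<in> (\<Union>y\<in>g ` D'. cball y r)" using \<open>c \<in> D'\<close> by auto
  qed
  moreover have "finite D'" using assms(1) by (simp add: D'_def)
  ultimately have "covnum r A \<le> card (g ` D')"
    using g by (intro covnum_le_card) auto
  also have "\<dots> \<le> card D'" using \<open>finite D'\<close> by (rule card_image_le)
  also have "\<dots> \<le> card D" using assms(1) by (intro card_mono) (auto simp: D'_def)
  finally show ?thesis .
qed

lemma card_le_covnum:
  fixes A :: "'a::metric_space set"
  assumes "compact A" "0 < r" "finite P" "P \<subseteq> A" "separated \<delta> P" "2 * r < \<delta>"
  shows "card P \<le> covnum r A"
proof -
  define covers where "covers = {card C | C. finite C \<and> C \<subseteq> A \<and> A \<subseteq> (\<Union>c\<in>C. cball c r)}"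
  obtain k where k: "finite k" "k \<subseteq> A" "A \<subseteq> (\<Union>x\<in>k. ball x r)"
    using seq_compact_imp_totally_bounded[OF compact_imp_seq_compact[OF assms(1)]] assms(2) by metis
  then have "card k \<in> covers" unfolding covers_def by force
  then have "Inf covers \<in> covers" using Inf_nat_def1 by blast
  then obtain C where C: "covnum r A = card C" "finite C" "A \<subseteq> (\<Union>c\<in>C. cball c r)"
    unfolding covers_def covnum_def by auto
  show ?thesis
    unfolding C(1)
  proof (rule card_le_if_inj_on_rel[OF C(2), where r = "\<lambda>p c. dist p c \<le> r"])
    show "\<exists>c. c \<in> C \<and> dist p c \<le> r" if "p \<in> P" for p
      using that assms(4) C(3) by (force simp: dist_commute)
    show "p = q" if "p \<in> P" "q \<in> P" "dist p c \<le> r" "dist q c \<le> r" for p q c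
    proof (rule ccontr)
      assume "p \<noteq> q"
      then have "\<delta> \<le> dist p q" using assms(5) that(1,2) unfolding separated_def by blast
      also have "\<dots> \<le> dist p c + dist q c" by (rule dist_triangle2)
      finally show False using that(3,4) assms(6) by linarith
    qed
  qed
qed

lemma separated_Un_translate:
  fixes S :: "real set"
  assumes "separated \<delta> S" "0 \<le> t" "d \<le> t" "d \<le> \<delta> - t"
  shows "separated d (S \<union> (\<lambda>q. q + t) ` S)"
proof -
  have cross: "d \<le> dist p (q + t)" if "p \<in> S" "q \<in> S" for p q
  proof (cases "p = q")
    case False
    then have "\<delta> \<le> \<bar>p - q\<bar>" using assms(1) that unfolding separated_def dist_real_def by blast
    moreover have "\<bar>p - q\<bar> \<le> \<bar>p - (q + t)\<bar> + \<bar>t\<bar>" using abs_triangle_ineq[of "p - (q + t)" t] by simp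
    ultimately show ?thesis using assms(4) abs_of_nonneg[OF assms(2)] unfolding dist_real_def by linarith
  qed (use assms(3) in \<open>simp add: dist_real_def\<close>)
  have "d \<le> \<delta>" using assms(2,4) by linarith
  then show ?thesis
    using assms(1) cross unfolding separated_def
    by (fastforce simp: dist_commute dist_real_def)
qed

lemma norm_le_DIM_mult:
  fixes v :: "'b::euclidean_space" and c :: real
  assumes "\<And>i. i \<in> Basis \<Longrightarrow> \<bar>v \<bullet> i\<bar> \<le> c"
  shows "norm v \<le> DIM('b) * c"
proof -
  have "norm v \<le> (\<Sum>i\<in>Basis. \<bar>v \<bullet> i\<bar>)" by (rule norm_le_l1)
  also have "\<dots> \<le> (\<Sum>i\<in>(Basis::'b set). c)" using assms by (rule sum_mono)
  finally show ?thesis by simp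
qed

lemma bij_betw_coordinates_in:
  "bij_betw (\<lambda>x. restrict (\<lambda>i. x \<bullet> i) Basis) {x :: 'b::euclidean_space. \<forall>i\<in>Basis. x \<bullet> i \<in> Q}
     (PiE Basis (\<lambda>_. Q))"
proof (rule bij_betwI[where g = "\<lambda>f. \<Sum>i\<in>Basis. f i *\<^sub>R i"])
  show "(\<lambda>f. \<Sum>i\<in>Basis. f i *\<^sub>R i) \<in> PiE Basis (\<lambda>_. Q) \<rightarrow> {x :: 'b. \<forall>i\<in>Basis. x \<bullet> i \<in> Q}"
    by (auto simp: PiE_iff)
  show "(\<Sum>i\<in>Basis. restrict (\<lambda>i. x \<bullet> i) Basis i *\<^sub>R i) = x" for x :: 'b
    by (simp add: euclidean_representation)
  show "restrict (\<lambda>i. (\<Sum>j\<in>Basis. f j *\<^sub>R j) \<bullet> i) Basis = f"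
    if "f \<in> PiE Basis (\<lambda>_. Q)" for f :: "'b \<Rightarrow> real"
    using that by (auto simp: PiE_iff extensional_def)
qed auto

lemma finite_coordinates_in:
  assumes "finite Q"
  shows "finite {x :: 'b::euclidean_space. \<forall>i\<in>Basis. x \<bullet> i \<in> Q}"
proof -
  have "finite (PiE (Basis :: 'b set) (\<lambda>_. Q))" using assms by (simp add: finite_PiE)
  then show ?thesis using bij_betw_finite[OF bij_betw_coordinates_in] by blast
qed

lemma card_coordinates_in: "card {x :: 'b::euclidean_space. \<forall>i\<in>Basis. x \<bullet> i \<in> Q} = card Q ^ DIM('b)"
  using bij_betw_same_card[OF bij_betw_coordinates_in] by (simp add: card_PiE)

definition assouad_exponent :: "'a::metric_space set \<Rightarrow> real \<Rightarrow> bool" where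
  "assouad_exponent K \<beta> \<longleftrightarrow> (\<exists>C>0. \<forall>r R x. 0 < r \<and> r \<le> R \<and> R < 1 \<and> x \<in> K \<longrightarrow>
      real (covnum r (cball x R \<inter> K)) \<le> C * (R / r) powr \<beta>)"

lemma assouad_dim_eqI:
  assumes "0 \<le> s" "\<And>\<beta>. s < \<beta> \<Longrightarrow> assouad_exponent K \<beta>"
    "\<And>\<beta>. 0 < \<beta> \<Longrightarrow> \<beta> < s \<Longrightarrow> \<not> assouad_exponent K \<beta>"
  shows "assouad_dim K = s"
proof -
  have "assouad_dim K = Inf {\<beta>. 0 < \<beta> \<and> assouad_exponent K \<beta>}"
    unfolding assouad_dim_def assouad_exponent_def ..
  also have "\<dots> = s"
  proof (rule cInf_eq_non_empty)
    have "s + 1 \<in> {\<beta>. 0 < \<beta> \<and> assouad_exponent K \<beta>}"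
      using assms(1) assms(2)[of "s + 1"] by auto
    then show "{\<beta>. 0 < \<beta> \<and> assouad_exponent K \<beta>} \<noteq> {}" by blast
    show "s \<le> \<beta>" if "\<beta> \<in> {\<beta>. 0 < \<beta> \<and> assouad_exponent K \<beta>}" for \<beta>
      using assms(3)[of \<beta>] that by force
    show "y \<le> s" if "\<And>\<beta>. \<beta> \<in> {\<beta>. 0 < \<beta> \<and> assouad_exponent K \<beta>} \<Longrightarrow> y \<le> \<beta>" for y
    proof (rule field_le_epsilon)
      fix e :: real assume "0 < e"
      then show "y \<le> s + e" using that assms(1) assms(2)[of "s + e"] by auto
    qed
  qed
  finally show ?thesis .
qed

lemma lower_dim_eq_0I:
  assumes "\<And>\<alpha> C. 0 < \<alpha> \<Longrightarrow> 0 < C \<Longrightarrow> \<exists>r R x. 0 < r \<and> r \<le> R \<and> R < 1 \<and> x \<in> F \<and>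
      real (covnum r (cball x R \<inter> F)) < C * (R / r) powr \<alpha>"
  shows "lower_dim F = 0"
  unfolding lower_dim_def Let_def using assms by (fastforce simp: not_le)

lemma assouad_dim_singleton: "assouad_dim {x :: 'a::metric_space} = 0"
proof (rule assouad_dim_eqI)
  fix \<beta> :: real assume "0 < \<beta>"
  have "real (covnum r (cball y R \<inter> {x})) \<le> 1 * (R / r) powr \<beta>"
    if "0 < r" "r \<le> R" "y \<in> {x}" for r R y
  proof -
    have "covnum r (cball y R \<inter> {x}) \<le> card {x}"
      using that by (intro covnum_le_card) auto
    then have "real (covnum r (cball y R \<inter> {x})) \<le> 1" by simp
    also have "1 \<le> (R / r) powr \<beta>" using that \<open>0 < \<beta>\<close> by (intro ge_one_powr_ge_zero) auto
    finally show ?thesis by simp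
  qed
  then show "assouad_exponent {x} \<beta>" unfolding assouad_exponent_def by (intro exI[of _ 1]) auto
qed auto

section \<open>Empty annuli and microsets\<close>

definition annulus :: "'a::metric_space \<Rightarrow> real \<Rightarrow> real \<Rightarrow> 'a set" where
  "annulus x r R = {w. r < dist w x \<and> dist w x < R}"

lemma mem_annulus [simp]: "w \<in> annulus x r R \<longleftrightarrow> r < dist w x \<and> dist w x < R"
  by (simp add: annulus_def)

lemma annulus_mono: "r' \<le> r \<Longrightarrow> R \<le> R' \<Longrightarrow> annulus x r R \<subseteq> annulus x r' R'"
  by auto

definition uniformly_annulus_porous :: "'a::metric_space set \<Rightarrow> bool" where
  "uniformly_annulus_porous K \<longleftrightarrow> (\<forall>L\<ge>2. \<exists>c>0. \<forall>x\<in>K. \<forall>s. 0 < s \<and> s \<le> 1 \<longrightarrow>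
      (\<exists>R. c * s \<le> R \<and> R \<le> s \<and> K \<inter> annulus x (R / L) R = {}))"

definition annulus_porous :: "'a::metric_space set \<Rightarrow> bool" where
  "annulus_porous E \<longleftrightarrow> (\<forall>y\<in>E. \<forall>L\<ge>2. \<exists>R>0. R \<le> 1/2 \<and> E \<inter> annulus y (R / L) R = {})"

lemma lower_dim_eq_0_if_annulus_porous:
  assumes "annulus_porous E" "F \<noteq> {}" "F \<subseteq> E"
  shows "lower_dim F = 0"
proof (rule lower_dim_eq_0I)
  fix \<alpha> C :: real assume "0 < \<alpha>" "0 < C"
  obtain x where x: "x \<in> F" using assms(2) by blast
  define L where "L = 2 * (2 / C) powr (1 / \<alpha>) + 2"
  have L: "2 \<le> L" unfolding L_def by simp
  have "2 / C = ((2 / C) powr (1 / \<alpha>)) powr \<alpha>"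
    using \<open>0 < \<alpha>\<close> \<open>0 < C\<close> by (simp add: powr_powr)
  also have "\<dots> \<le> (L / 2) powr \<alpha>" using \<open>0 < \<alpha>\<close> by (intro powr_mono2) (auto simp: L_def)
  finally have CL: "2 \<le> C * (L / 2) powr \<alpha>" using \<open>0 < C\<close> by (simp add: divide_le_eq mult.commute)
  obtain R where R: "0 < R" "R \<le> 1/2" "E \<inter> annulus x (R / L) R = {}"
    using assms(1) x assms(3) L unfolding annulus_porous_def by blast
  have "cball x (R/2) \<inter> F \<subseteq> cball x (R / L)"
  proof
    fix w assume w: "w \<in> cball x (R/2) \<inter> F"
    then have "dist w x < R" "w \<in> E" using R(1) assms(3) by (auto simp: dist_commute)
    then show "w \<in> cball x (R / L)" using R(3) by (force simp: dist_commute)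
  qed
  then have "covnum (R / L) (cball x (R/2) \<inter> F) \<le> 1"
    using covnum_le_card[of "{x}" "cball x (R/2) \<inter> F" "R / L"] x R(1) by auto
  moreover have "(R/2) / (R / L) = L / 2" using R(1) L by (simp add: field_simps)
  ultimately have "real (covnum (R / L) (cball x (R/2) \<inter> F)) < C * ((R/2) / (R / L)) powr \<alpha>"
    using CL R(1) by simp
  moreover have "0 < R / L" "R / 2 < 1" using R(1,2) L by auto
  moreover have "R / L \<le> R / 2" using R(1) L by (intro divide_left_mono) auto
  ultimately show "\<exists>r R x. 0 < r \<and> r \<le> R \<and> R < 1 \<and> x \<in> F \<and>
      real (covnum r (cball x R \<inter> F)) < C * (R / r) powr \<alpha>"
    using x by blast
qed

lemma mod_lower_dim_eq_0_if_annulus_porous: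
  assumes "annulus_porous E" "E \<noteq> {}"
  shows "mod_lower_dim E = 0"
proof -
  have "{lower_dim F | F. F \<noteq> {} \<and> F \<subseteq> E} = {0}"
  proof (intro equalityI subsetI)
    show "z \<in> {0}" if "z \<in> {lower_dim F | F. F \<noteq> {} \<and> F \<subseteq> E}" for z
      using that lower_dim_eq_0_if_annulus_porous[OF assms(1)] by auto
    show "z \<in> {lower_dim F | F. F \<noteq> {} \<and> F \<subseteq> E}" if "z \<in> {0}" for z
      using that lower_dim_eq_0_if_annulus_porous[OF assms order_refl] assms(2) by auto
  qed
  then show ?thesis unfolding mod_lower_dim_def by simp
qed

lemma hausdorff_limit_approx:
  fixes E :: "'a::metric_space set"
  assumes "compact E" "\<And>n. S n \<noteq> {}" "(\<lambda>n. hausdorff_dist (S n) E) \<longlonglongrightarrow> 0" "y \<in> E"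
  obtains ys where "\<And>n. ys n \<in> S n" "ys \<longlonglongrightarrow> y"
proof -
  have infdist_le: "infdist y (S n) \<le> hausdorff_dist (S n) E" for n
  proof -
    obtain s where s: "s \<in> S n" using assms(2) by blast
    obtain e where e: "\<forall>b\<in>E. dist s b \<le> e"
      using compact_imp_bounded[OF assms(1)] bounded_any_center by blast
    have "bdd_above ((\<lambda>b. infdist b (S n)) ` E)"
      using e infdist_le[OF s] by (intro bdd_aboveI2[of _ _ e]) (metis dist_commute order_trans)
    then have "infdist y (S n) \<le> (SUP b\<in>E. infdist b (S n))" by (rule cSUP_upper[OF assms(4)])
    then show ?thesis unfolding hausdorff_dist_def by simp
  qed
  have "\<exists>a\<in>S n. dist y a < infdist y (S n) + 1 / Suc n" for n
  proof -
    have "Inf (dist y ` S n) < infdist y (S n) + 1 / Suc n"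
      using infdist_notempty[OF assms(2)] by simp
    then show ?thesis using assms(2)[of n] by (subst (asm) cInf_less_iff) auto
  qed
  then obtain ys where ys: "\<And>n. ys n \<in> S n" "\<And>n. dist y (ys n) < infdist y (S n) + 1 / Suc n"
    by metis
  have "(\<lambda>n. infdist y (S n)) \<longlonglongrightarrow> 0"
    by (rule tendsto_sandwich[OF _ _ tendsto_const assms(3)]) (auto simp: infdist_nonneg infdist_le)
  then have lim: "(\<lambda>n. infdist y (S n) + 1 / Suc n) \<longlonglongrightarrow> 0"
    using tendsto_add[OF _ LIMSEQ_Suc[OF lim_inverse_n']] by (simp add: inverse_eq_divide)
  have "(\<lambda>n. dist (ys n) y) \<longlonglongrightarrow> 0"
    by (rule tendsto_sandwich[OF _ _ tendsto_const lim])
      (use ys(2) in \<open>auto simp: dist_commute less_imp_le\<close>)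
  then have "ys \<longlonglongrightarrow> y" by (rule tendsto_dist_iff[THEN iffD2])
  with ys(1) show ?thesis by (rule that)
qed

lemma empty_annulus_limit:
  assumes "Rs \<longlonglongrightarrow> R" "ys \<longlonglongrightarrow> y" "0 < L"
    and "\<And>n. S n \<inter> annulus (ys n) (Rs n / L) (Rs n) = {}"
    and "\<And>w. w \<in> E \<Longrightarrow> \<exists>ws. (\<forall>n. ws n \<in> S n) \<and> ws \<longlonglongrightarrow> w"
  shows "E \<inter> annulus y (R / L) R = {}"
proof (rule ccontr)
  assume "E \<inter> annulus y (R / L) R \<noteq> {}"
  then obtain w where w: "w \<in> E" "R / L < dist w y" "dist w y < R" by auto
  then obtain ws where ws: "\<And>n. ws n \<in> S n" "ws \<longlonglongrightarrow> w" using assms(5) by blast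
  have d: "(\<lambda>n. dist (ws n) (ys n)) \<longlonglongrightarrow> dist w y" using ws(2) assms(2) by (rule tendsto_dist)
  have "(\<lambda>n. dist (ws n) (ys n) - Rs n / L) \<longlonglongrightarrow> dist w y - R / L"
    using tendsto_diff[OF d tendsto_divide[OF assms(1) tendsto_const]] assms(3) by simp
  then have "\<forall>\<^sub>F n in sequentially. 0 < dist (ws n) (ys n) - Rs n / L"
    using w(2) by (intro order_tendstoD(1)) auto
  moreover have "(\<lambda>n. Rs n - dist (ws n) (ys n)) \<longlonglongrightarrow> R - dist w y"
    using assms(1) d by (rule tendsto_diff)
  then have "\<forall>\<^sub>F n in sequentially. 0 < Rs n - dist (ws n) (ys n)"
    using w(3) by (intro order_tendstoD(1)) auto
  ultimately have "\<forall>\<^sub>F n in sequentially. ws n \<in> S n \<inter> annulus (ys n) (Rs n / L) (Rs n)"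
    by eventually_elim (use ws(1) in auto)
  then show False using assms(4) by simp
qed

lemma zero_mem_miniset: "S \<in> minisets K \<Longrightarrow> 0 \<in> S"
  unfolding minisets_def by force

lemma miniset_empty_annulus:
  assumes "uniformly_annulus_porous K" "2 \<le> L"
  obtains c where "0 < c"
    "\<And>S y. S \<in> minisets K \<Longrightarrow> y \<in> S \<Longrightarrow> \<exists>R. c \<le> R \<and> R \<le> 1/2 \<and> S \<inter> annulus y (R / L) R = {}"
proof -
  obtain c where c: "0 < c" and gap: "\<And>x s. x \<in> K \<Longrightarrow> 0 < s \<Longrightarrow> s \<le> 1 \<Longrightarrow>
      \<exists>R. c * s \<le> R \<and> R \<le> s \<and> K \<inter> annulus x (R / L) R = {}"
    using assms unfolding uniformly_annulus_porous_def by meson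
  have "\<exists>R. c / 2 \<le> R \<and> R \<le> 1/2 \<and> S \<inter> annulus y (R / L) R = {}"
    if "S \<in> minisets K" "y \<in> S" for S y
  proof -
    obtain x t where S: "S = (\<lambda>v. t *\<^sub>R (v - x)) ` K \<inter> cball 0 1" and "x \<in> K" "1 \<le> t"
      using \<open>S \<in> minisets K\<close> unfolding minisets_def by blast
    then obtain z where z: "z \<in> K" "y = t *\<^sub>R (z - x)" using \<open>y \<in> S\<close> by blast
    have "0 < 1 / (2 * t)" "1 / (2 * t) \<le> 1" using \<open>1 \<le> t\<close> by auto
    then obtain R where R: "c * (1 / (2 * t)) \<le> R" "R \<le> 1 / (2 * t)" "K \<inter> annulus z (R / L) R = {}"
      using gap[OF z(1)] by blast
    have dist_scaled: "dist (t *\<^sub>R (v - x)) y = t * dist v z" for v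
      using \<open>1 \<le> t\<close> unfolding z(2) dist_norm by (simp add: algebra_simps flip: scaleR_diff_right)
    have "S \<inter> annulus y (t * R / L) (t * R) = {}"
    proof (rule ccontr)
      assume "S \<inter> annulus y (t * R / L) (t * R) \<noteq> {}"
      then obtain v where v: "v \<in> K" "t * (R / L) < t * dist v z" "t * dist v z < t * R"
        by (auto simp: S dist_scaled)
      have "0 < t" using \<open>1 \<le> t\<close> by simp
      then have "R / L < dist v z" "dist v z < R"
        using v(2,3) by (simp_all only: mult_less_cancel_left_pos)
      with v(1) R(3) show False by auto
    qed
    moreover have "c / 2 \<le> t * R" "t * R \<le> 1/2"
      using R(1,2) \<open>1 \<le> t\<close> by (auto simp: field_simps)
    ultimately show ?thesis by blast
  qed
  then show ?thesis using that[of "c / 2"] c by simp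
qed

lemma annulus_porous_microset:
  assumes "uniformly_annulus_porous K" "E \<in> microsets K"
  shows "annulus_porous E"
  unfolding annulus_porous_def
proof (intro ballI allI impI)
  fix y and L :: real assume "y \<in> E" "2 \<le> L"
  obtain S where S: "\<And>n. S n \<in> minisets K" and E: "compact E"
    and hd: "(\<lambda>n. hausdorff_dist (S n) E) \<longlonglongrightarrow> 0"
    using assms(2) unfolding microsets_def by blast
  have S_ne: "S n \<noteq> {}" for n using zero_mem_miniset[OF S] by blast
  obtain c where c: "0 < c" and gap: "\<And>S y. S \<in> minisets K \<Longrightarrow> y \<in> S \<Longrightarrow>
      \<exists>R. c \<le> R \<and> R \<le> 1/2 \<and> S \<inter> annulus y (R / L) R = {}"
    using miniset_empty_annulus[OF assms(1) \<open>2 \<le> L\<close>] by blast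
  obtain ys where ys: "\<And>n. ys n \<in> S n" "ys \<longlonglongrightarrow> y"
    using hausdorff_limit_approx[OF E S_ne hd \<open>y \<in> E\<close>] by blast
  obtain Rs where Rs: "\<And>n. Rs n \<in> {c..1/2}" "\<And>n. S n \<inter> annulus (ys n) (Rs n / L) (Rs n) = {}"
    using gap[OF S ys(1)] by (simp only: atLeastAtMost_iff) metis
  obtain R \<phi> where R: "R \<in> {c..1/2}" and \<phi>: "strict_mono \<phi>" and lim: "(Rs \<circ> \<phi>) \<longlonglongrightarrow> R"
    using compact_imp_seq_compact[OF compact_Icc] Rs(1) by (metis seq_compactE)
  have "E \<inter> annulus y (R / L) R = {}"
  proof (rule empty_annulus_limit[OF lim LIMSEQ_subseq_LIMSEQ[OF ys(2) \<phi>]])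
    show "0 < L" using \<open>2 \<le> L\<close> by simp
    show "S (\<phi> n) \<inter> annulus ((ys \<circ> \<phi>) n) ((Rs \<circ> \<phi>) n / L) ((Rs \<circ> \<phi>) n) = {}" for n
      using Rs(2) by simp
    show "\<exists>ws. (\<forall>n. ws n \<in> S (\<phi> n)) \<and> ws \<longlonglongrightarrow> w" if "w \<in> E" for w
    proof -
      obtain ws where "\<And>n. ws n \<in> S n" "ws \<longlonglongrightarrow> w"
        using hausdorff_limit_approx[OF E S_ne hd \<open>w \<in> E\<close>] by blast
      then show ?thesis using LIMSEQ_subseq_LIMSEQ[OF _ \<phi>] by (metis comp_apply)
    qed
  qed
  then show "\<exists>R>0. R \<le> 1/2 \<and> E \<inter> annulus y (R / L) R = {}" using R c by (intro exI[of _ R]) auto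
qed

lemma mod_lower_dim_microset:
  assumes "uniformly_annulus_porous K" "E \<in> microsets K"
  shows "mod_lower_dim E = 0"
  using assms mod_lower_dim_eq_0_if_annulus_porous annulus_porous_microset
  unfolding microsets_def by blast

lemma uniformly_annulus_porous_singleton: "uniformly_annulus_porous {x :: 'a::metric_space}"
  unfolding uniformly_annulus_porous_def
proof (intro allI impI)
  fix L :: real assume "2 \<le> L"
  show "\<exists>c>0. \<forall>y\<in>{x}. \<forall>s. 0 < s \<and> s \<le> 1 \<longrightarrow>
      (\<exists>R. c * s \<le> R \<and> R \<le> s \<and> {x} \<inter> annulus y (R / L) R = {})"
  proof (rule exI[of _ 1], intro conjI ballI allI impI)
    fix y and s :: real assume "y \<in> {x}" "0 < s \<and> s \<le> 1"
    then show "\<exists>R. 1 * s \<le> R \<and> R \<le> s \<and> {x} \<inter> annulus y (R / L) R = {}"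
      using \<open>2 \<le> L\<close> by (intro exI[of _ s]) (auto simp: divide_less_0_iff)
  qed simp
qed

section \<open>A Cantor set with prescribed Assouad dimension\<close>

locale cantor_scales =
  fixes a :: real
  assumes a_pos: "0 < a" and a_less_1: "a < 1"
begin

text \<open>Any \<open>weight\<close> in \<open>(0, (1 - a) * ln 2)\<close> would do: positivity turns the drops of \<open>bitsum\<close>
  into large gaps, and the upper bound keeps \<open>len (Suc n) / len n\<close> below \<open>1/2\<close>.\<close>
definition weight :: real where "weight = (1 - a) * ln 2 / 2"

text \<open>\<open>len n = 2 powr (-n/a) * exp (weight * bitsum n / a)\<close>: up to the digit-sum factor, \<open>2^n\<close>
  intervals of length \<open>len n\<close> have total \<open>a\<close>-dimensional content 1.\<close>
definition len :: "nat \<Rightarrow> real" where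
  "len n = exp (- (real n * ln 2 - weight * real (bitsum n)) / a)"

definition decay :: real where "decay = (ln 2 - weight) / a"

definition max_ratio :: real where "max_ratio = exp (- decay)"

definition gap_ratio :: real where "gap_ratio = 1 - 2 * max_ratio"

definition min_ratio :: "nat \<Rightarrow> real" where "min_ratio t = exp (- (ln 2 + weight * real t) / a)"

lemma weight_pos: "0 < weight"
  using a_less_1 by (simp add: weight_def)

lemma len_pos: "0 < len n"
  by (simp add: len_def)

lemma len_0 [simp]: "len 0 = 1"
  by (simp add: len_def)

lemma len_Suc: "len (Suc n) = len n * exp (- (ln 2 - weight * (real (bitsum (Suc n)) - real (bitsum n))) / a)"
proof -
  have exponent: "- (real (Suc n) * ln 2 - weight * real (bitsum (Suc n)))
      = - (real n * ln 2 - weight * real (bitsum n))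
        + - (ln 2 - weight * (real (bitsum (Suc n)) - real (bitsum n)))"
    by (simp add: algebra_simps)
  show ?thesis unfolding len_def exponent add_divide_distrib exp_add ..
qed

lemma decay_gt_ln2: "ln 2 < decay"
proof -
  have "a * ln 2 < (1 + a) / 2 * ln 2" using a_less_1 by (intro mult_strict_right_mono) auto
  also have "\<dots> = ln 2 - weight" by (simp add: weight_def field_simps)
  finally have "a * ln 2 < ln 2 - weight" .
  then show ?thesis using a_pos by (simp add: decay_def field_simps)
qed

lemma decay_pos: "0 < decay"
  using decay_gt_ln2 ln_ge_zero[of 2] by linarith

lemma max_ratio_pos: "0 < max_ratio"
  by (simp add: max_ratio_def)

lemma max_ratio_less_half: "max_ratio < 1/2"
proof -
  have "exp (- decay) < exp (- ln 2)" using decay_gt_ln2 by simp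
  then show ?thesis by (simp add: max_ratio_def exp_minus)
qed

lemma gap_ratio_pos: "0 < gap_ratio"
  using max_ratio_less_half by (simp add: gap_ratio_def)

lemma gap_ratio_le_1: "gap_ratio \<le> 1"
  using max_ratio_pos by (simp add: gap_ratio_def)

lemma min_ratio_pos: "0 < min_ratio t"
  by (simp add: min_ratio_def)

lemma min_ratio_le_1: "min_ratio t \<le> 1"
proof -
  have "0 \<le> ln 2 + weight * real t" using weight_pos by simp
  then have "- (ln 2 + weight * real t) / a \<le> 0"
    using a_pos by (intro divide_nonpos_pos) auto
  then show ?thesis by (simp add: min_ratio_def)
qed

lemma len_Suc_le: "len (Suc n) \<le> max_ratio * len n"
proof -
  have "weight * (real (bitsum (Suc n)) - real (bitsum n)) \<le> weight"
    using bitsum_Suc_le[of n] weight_pos by (simp add: mult_le_cancel_left1)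
  then have "- (ln 2 - weight * (real (bitsum (Suc n)) - real (bitsum n))) / a \<le> - (ln 2 - weight) / a"
    using a_pos by (intro divide_right_mono) auto
  then have "- (ln 2 - weight * (real (bitsum (Suc n)) - real (bitsum n))) / a \<le> - decay"
    by (simp add: decay_def minus_divide_left)
  then show ?thesis using len_pos[of n] by (simp add: len_Suc max_ratio_def mult.commute)
qed

lemma len_Suc_less: "len (Suc n) < len n"
proof -
  have "max_ratio * len n < 1 * len n"
    using max_ratio_less_half len_pos[of n] by (intro mult_strict_right_mono) auto
  then show ?thesis using len_Suc_le[of n] by simp
qed

lemma len_antimono: "m \<le> n \<Longrightarrow> len n \<le> len m"
  by (induction n rule: dec_induct) (auto intro: order_trans less_imp_le[OF len_Suc_less])

lemma len_add_le: "len (n + w) \<le> max_ratio ^ w * len n"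
proof (induction w)
  case (Suc w)
  have "len (n + Suc w) \<le> max_ratio * len (n + w)" using len_Suc_le[of "n + w"] by simp
  also have "\<dots> \<le> max_ratio * (max_ratio ^ w * len n)"
    using Suc max_ratio_pos by (simp add: mult_left_mono)
  finally show ?case by simp
qed simp

lemma obtain_len_less:
  assumes "0 < e"
  obtains n where "len n < e"
proof -
  have "max_ratio < 1" using max_ratio_less_half by simp
  then obtain n where "max_ratio ^ n < e" using real_arch_pow_inv[OF assms] by blast
  then show ?thesis using len_add_le[of 0 n] by (intro that[of n]) simp
qed

lemma exp_decay_le_len_ratio: "exp (decay * real w) \<le> len n / len (n + w)"
proof -
  have "len (n + w) * exp (decay * real w) \<le> max_ratio ^ w * len n * exp (decay * real w)"
    using len_add_le[of n w] by (intro mult_right_mono) auto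
  also have "\<dots> = len n"
    by (simp add: max_ratio_def flip: exp_of_nat_mult exp_add)
  finally have "len (n + w) * exp (decay * real w) \<le> len n" .
  then show ?thesis using len_pos[of "n + w"] by (simp add: field_simps)
qed

lemma two_pow_eq_len_ratio:
  "2 ^ w = (len n / len (n + w)) powr a * exp (weight * (real (bitsum (n + w)) - real (bitsum n)))"
proof -
  have "(len n / len (n + w)) powr a = exp (real w * ln 2 - weight * (real (bitsum (n + w)) - real (bitsum n)))"
    using a_pos len_pos[of n] len_pos[of "n + w"]
    by (simp add: powr_def ln_div len_def field_simps)
  moreover have "(2::real) ^ w = exp (real w * ln 2)"
    by (simp add: powr_def flip: powr_realpow)
  ultimately show ?thesis by (simp flip: exp_add)
qed

lemma len_Suc_le_if_dvd: "2 ^ t dvd Suc j \<Longrightarrow> len (Suc j) \<le> len j * exp (- weight * (real t - 1) / a)"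
proof -
  assume "2 ^ t dvd Suc j"
  then have "real (bitsum (Suc j)) - real (bitsum j) \<le> 1 - real t"
    using bitsum_Suc_if_dvd[of t j] by linarith
  then have "weight * (real (bitsum (Suc j)) - real (bitsum j)) \<le> weight * (1 - real t)"
    using weight_pos by (intro mult_left_mono) auto
  moreover have "weight * (1 - real t) = - weight * (real t - 1)" by (simp add: algebra_simps)
  moreover have "0 < ln (2::real)" by simp
  ultimately have "- (ln 2 - weight * (real (bitsum (Suc j)) - real (bitsum j))) \<le> - weight * (real t - 1)"
    by linarith
  then have "- (ln 2 - weight * (real (bitsum (Suc j)) - real (bitsum j))) / a \<le> - weight * (real t - 1) / a"
    using a_pos by (rule divide_right_mono[OF _ less_imp_le])
  then have "len j * exp (- (ln 2 - weight * (real (bitsum (Suc j)) - real (bitsum j))) / a)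
      \<le> len j * exp (- weight * (real t - 1) / a)"
    using len_pos[of j] by (intro mult_left_mono) auto
  then show ?thesis by (simp only: len_Suc)
qed

lemma min_ratio_le_len_Suc: "\<not> 2 ^ t dvd Suc j \<Longrightarrow> min_ratio t * len j \<le> len (Suc j)"
proof -
  assume "\<not> 2 ^ t dvd Suc j"
  then have "- real t \<le> real (bitsum (Suc j)) - real (bitsum j)"
    using bitsum_Suc_if_not_dvd[of t j] by linarith
  then have "weight * (- real t) \<le> weight * (real (bitsum (Suc j)) - real (bitsum j))"
    using weight_pos by (intro mult_left_mono) auto
  then have "- (ln 2 + weight * real t) \<le> - (ln 2 - weight * (real (bitsum (Suc j)) - real (bitsum j)))"
    by simp
  then have "- (ln 2 + weight * real t) / a \<le> - (ln 2 - weight * (real (bitsum (Suc j)) - real (bitsum j))) / a"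
    using a_pos by (rule divide_right_mono[OF _ less_imp_le])
  then have "min_ratio t * len j
      \<le> exp (- (ln 2 - weight * (real (bitsum (Suc j)) - real (bitsum j))) / a) * len j"
    using len_pos[of j] by (intro mult_right_mono) (auto simp: min_ratio_def)
  then show ?thesis by (simp add: len_Suc mult.commute)
qed

lemma obtain_first_len_le:
  assumes "0 < e"
  obtains n where "k \<le> n" "len n \<le> e" "n = k \<or> e < len (n - 1)"
proof -
  obtain n0 where "len n0 < e" using obtain_len_less[OF assms] .
  then have ex: "\<exists>m. len (k + m) \<le> e" using len_antimono[of n0 "k + n0"] by (intro exI[of _ n0]) simp
  define m where "m = (LEAST m. len (k + m) \<le> e)"
  have "len (k + m) \<le> e" unfolding m_def using ex by (rule LeastI_ex)
  moreover have "k + m = k \<or> e < len (k + m - 1)"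
  proof (cases m)
    case (Suc m')
    then have "m' < m" by simp
    then have "\<not> len (k + m') \<le> e" unfolding m_def by (rule not_less_Least)
    then show ?thesis using Suc by simp
  qed simp
  ultimately show ?thesis by (intro that[of "k + m"]) auto
qed

lemma obtain_len_bracket:
  assumes "0 < e" "e \<le> 1"
  obtains n where "len (Suc n) \<le> e" "e \<le> len n"
proof -
  obtain m where m: "len m \<le> e" "m = 0 \<or> e < len (m - 1)"
    using obtain_first_len_le[OF assms(1), of 0] by auto
  show ?thesis
  proof (cases m)
    case 0
    then show ?thesis using m(1) assms(2) len_Suc_less[of 0] by (intro that[of 0]) auto
  next
    case (Suc k)
    then show ?thesis using m by (intro that[of k]) auto
  qed
qed

lemma two_pow_le_len_ratio_powr:
  assumes "0 < \<gamma>"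
  obtains K where "0 < K" "\<And>n w. 2 ^ w \<le> K * (len n / len (n + w)) powr (a + \<gamma>)"
proof -
  obtain M where M: "\<And>w. real (bitsum w) \<le> M + decay * \<gamma> / weight * real w"
    using bitsum_sublinear[of "decay * \<gamma> / weight"] decay_pos weight_pos assms by auto
  have bound: "2 ^ w \<le> exp (weight * M) * (len n / len (n + w)) powr (a + \<gamma>)" for n w
  proof -
    define X where "X = len n / len (n + w)"
    have X: "0 < X" "exp (decay * real w) \<le> X"
      using len_pos exp_decay_le_len_ratio unfolding X_def by auto
    have "weight * (real (bitsum (n + w)) - real (bitsum n)) \<le> weight * real (bitsum w)"
      using bitsum_add_le[of n w] weight_pos by (intro mult_left_mono) auto
    also have "\<dots> \<le> weight * (M + decay * \<gamma> / weight * real w)"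
      using M[of w] weight_pos by (intro mult_left_mono) auto
    also have "\<dots> = weight * M + decay * real w * \<gamma>"
      using weight_pos by (simp add: field_simps)
    finally have "(2::real) ^ w \<le> X powr a * exp (weight * M + decay * real w * \<gamma>)"
      unfolding X_def two_pow_eq_len_ratio[of w n] by (intro mult_left_mono) auto
    also have "\<dots> = exp (weight * M) * (X powr a * exp (decay * real w) powr \<gamma>)"
      by (simp add: exp_add exp_powr_real)
    also have "\<dots> \<le> exp (weight * M) * (X powr a * X powr \<gamma>)"
      using X assms by (intro mult_left_mono powr_mono2) auto
    finally show ?thesis by (simp add: X_def powr_add)
  qed
  show ?thesis by (rule that[of "exp (weight * M)"]) (use bound in auto)
qed

lemma len_ratio_powr_le_two_pow:
  "(len n / len (n + w)) powr a \<le> exp (weight * real (bitsum n)) * 2 ^ w"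
proof -
  have "(len n / len (n + w)) powr a * exp (- (weight * real (bitsum n)))
      \<le> (len n / len (n + w)) powr a * exp (weight * (real (bitsum (n + w)) - real (bitsum n)))"
    using weight_pos by (intro mult_left_mono) (auto simp: algebra_simps)
  also have "\<dots> = 2 ^ w" by (rule two_pow_eq_len_ratio[symmetric])
  finally show ?thesis by (simp add: exp_minus field_simps)
qed

definition shift :: "nat \<Rightarrow> real" where "shift n = len n - len (Suc n)"

text \<open>Each generation-\<open>n\<close> interval \<open>[p, p + len n]\<close> is replaced by the two intervals of length
  \<open>len (Suc n)\<close> at its ends; \<open>descendants p n m\<close> are the left end points of the generation-\<open>n + m\<close>
  intervals inside \<open>[p, p + len n]\<close>.\<close>
fun descendants :: "real \<Rightarrow> nat \<Rightarrow> nat \<Rightarrow> real set" where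
  "descendants p n 0 = {p}"
| "descendants p n (Suc m) = descendants p n m \<union> (\<lambda>q. q + shift (n + m)) ` descendants p n m"

definition left_ends :: "nat \<Rightarrow> real set" where "left_ends n = descendants 0 0 n"

definition level :: "nat \<Rightarrow> real set" where "level n = (\<Union>p\<in>left_ends n. {p..p + len n})"

definition cantor :: "real set" where "cantor = (\<Inter>n. level n)"

lemma left_ends_0 [simp]: "left_ends 0 = {0}"
  by (simp add: left_ends_def)

lemma left_ends_Suc: "left_ends (Suc n) = left_ends n \<union> (\<lambda>q. q + shift n) ` left_ends n"
  by (simp add: left_ends_def)

lemma descendants_add:
  "descendants p k (n + m) = (\<Union>q\<in>descendants p k n. descendants q (k + n) m)"
  by (induction m) (auto simp: add.assoc)

lemma left_ends_add: "left_ends (n + m) = (\<Union>p\<in>left_ends n. descendants p n m)"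
  unfolding left_ends_def using descendants_add[of 0 0 n m] by simp

lemma finite_descendants: "finite (descendants p n m)"
  by (induction m) auto

lemma card_descendants_le: "card (descendants p n m) \<le> 2 ^ m"
proof (induction m)
  case (Suc m)
  have "card (descendants p n (Suc m))
      \<le> card (descendants p n m) + card ((\<lambda>q. q + shift (n + m)) ` descendants p n m)"
    by (simp add: card_Un_le)
  also have "\<dots> \<le> 2 * card (descendants p n m)"
    using card_image_le[OF finite_descendants] by simp
  finally show ?case using Suc by simp
qed simp

lemma shift_pos: "0 < shift n"
  using len_Suc_less[of n] by (simp add: shift_def)

lemma shift_less_len: "shift n < len n"
  using len_pos[of "Suc n"] by (simp add: shift_def)

lemma gap_le_shift: "len (Suc n) + gap_ratio * len n \<le> shift n"
  using len_Suc_le[of n] by (simp add: shift_def gap_ratio_def algebra_simps)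

lemma descendants_bounds: "q \<in> descendants p n m \<Longrightarrow> p \<le> q \<and> q + len (n + m) \<le> p + len n"
proof (induction m arbitrary: q)
  case (Suc m)
  have le: "len (Suc (n + m)) \<le> len (n + m)" by (rule len_antimono) simp
  from Suc.prems consider "q \<in> descendants p n m"
    | x where "x \<in> descendants p n m" "q = x + shift (n + m)" by auto
  then show ?case
  proof cases
    case 1
    then show ?thesis using Suc.IH[of q] le by auto
  next
    case 2
    then show ?thesis using Suc.IH[of x] shift_pos[of "n + m"] by (auto simp: shift_def)
  qed
qed simp

lemma separated_left_ends: "separated (len (Suc n) + gap_ratio * len n) (left_ends (Suc n))"
proof (induction n)
  case 0
  have "separated (len (Suc 0) + gap_ratio + shift 0) {0}" by (simp add: separated_def)
  then show ?case
    unfolding left_ends_Suc left_ends_0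
    using gap_le_shift[of 0] shift_pos[of 0] by (intro separated_Un_translate) auto
next
  case (Suc n)
  have "len (Suc (Suc n)) + gap_ratio * len (Suc n) \<le> len (Suc n) + gap_ratio * len n - shift (Suc n)"
    using len_Suc_less[of n] gap_ratio_pos by (simp add: shift_def)
  then show ?case
    unfolding left_ends_Suc[of "Suc n"]
    using gap_le_shift[of "Suc n"] shift_pos[of "Suc n"] by (intro separated_Un_translate[OF Suc]) auto
qed

lemma left_ends_far: "p \<in> left_ends n \<Longrightarrow> q \<in> left_ends n \<Longrightarrow> p \<noteq> q \<Longrightarrow> len n < \<bar>p - q\<bar>"
proof (cases n)
  case (Suc m)
  assume "p \<in> left_ends n" "q \<in> left_ends n" "p \<noteq> q"
  then have "len (Suc m) + gap_ratio * len m \<le> \<bar>p - q\<bar>"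
    using separated_left_ends[of m] Suc unfolding separated_def dist_real_def by blast
  moreover have "0 < gap_ratio * len m" using gap_ratio_pos len_pos by simp
  ultimately show ?thesis using Suc by simp
qed simp

lemma card_descendants: "p \<in> left_ends n \<Longrightarrow> card (descendants p n m) = 2 ^ m"
proof (induction m)
  case (Suc m)
  have sub: "descendants p n m \<subseteq> left_ends (n + m)" using Suc.prems left_ends_add[of n m] by auto
  have "descendants p n m \<inter> (\<lambda>q. q + shift (n + m)) ` descendants p n m = {}"
  proof (rule ccontr)
    assume "descendants p n m \<inter> (\<lambda>q. q + shift (n + m)) ` descendants p n m \<noteq> {}"
    then obtain q where "q \<in> descendants p n m" "q + shift (n + m) \<in> descendants p n m" by auto
    then have "len (n + m) < \<bar>q - (q + shift (n + m))\<bar>"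
      using sub shift_pos[of "n + m"] by (intro left_ends_far) auto
    then show False using shift_pos[of "n + m"] shift_less_len[of "n + m"] by simp
  qed
  moreover have "card ((\<lambda>q. q + shift (n + m)) ` descendants p n m) = card (descendants p n m)"
    by (rule card_image) (simp add: inj_on_def)
  ultimately show ?case using Suc by (simp add: card_Un_disjoint finite_descendants)
qed simp

lemma level_Suc_subset: "level (Suc n) \<subseteq> level n"
proof
  fix x assume "x \<in> level (Suc n)"
  then obtain p where p: "p \<in> left_ends (Suc n)" "x \<in> {p..p + len (Suc n)}"
    unfolding level_def by blast
  have le: "len (Suc n) \<le> len n" by (rule len_antimono) simp
  from p(1) consider "p \<in> left_ends n" | q where "q \<in> left_ends n" "p = q + shift n"
    unfolding left_ends_Suc by blast
  then show "x \<in> level n"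
  proof cases
    case 1
    then show ?thesis using p(2) le unfolding level_def by fastforce
  next
    case 2
    then show ?thesis using p(2) shift_pos[of n] unfolding level_def shift_def by (intro UN_I[of q]) auto
  qed
qed

lemma level_antimono: "m \<le> n \<Longrightarrow> level n \<subseteq> level m"
  by (induction n rule: dec_induct) (use level_Suc_subset in blast)+

lemma left_ends_mono: "k \<le> n \<Longrightarrow> left_ends k \<subseteq> left_ends n"
  by (induction n rule: dec_induct) (auto simp: left_ends_Suc)

lemma left_ends_subset_level: "left_ends n \<subseteq> level n"
  using len_pos[of n] unfolding level_def by force

lemma left_ends_subset_cantor: "left_ends k \<subseteq> cantor"
proof -
  have "left_ends k \<subseteq> level n" for n
  proof (cases "k \<le> n")
    case True
    then have "left_ends k \<subseteq> left_ends n" by (rule left_ends_mono)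
    then show ?thesis using left_ends_subset_level by blast
  next
    case False
    then show ?thesis using left_ends_subset_level[of k] level_antimono[of n k] by auto
  qed
  then show ?thesis unfolding cantor_def by blast
qed

lemma zero_mem_cantor: "0 \<in> cantor"
  using left_ends_subset_cantor[of 0] by simp

lemma cantor_subset_unit_interval: "cantor \<subseteq> {0..1}"
proof -
  have "cantor \<subseteq> level 0" unfolding cantor_def by blast
  then show ?thesis by (simp add: level_def)
qed

lemma closed_cantor: "closed cantor"
  unfolding cantor_def level_def left_ends_def
  using finite_descendants by (intro closed_INT closed_UN) auto

lemma cantor_level: "x \<in> cantor \<Longrightarrow> \<exists>p\<in>left_ends n. x \<in> {p..p + len n}"
  unfolding cantor_def level_def by blast

lemma cantor_descendant:
  assumes "x \<in> cantor" "p \<in> left_ends n" "x \<in> {p..p + len n}"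
  shows "\<exists>q\<in>descendants p n m. x \<in> {q..q + len (n + m)}"
proof -
  obtain q where q: "q \<in> left_ends (n + m)" "x \<in> {q..q + len (n + m)}"
    using cantor_level[OF assms(1)] by blast
  then obtain p' where p': "p' \<in> left_ends n" "q \<in> descendants p' n m"
    using left_ends_add by auto
  then have "x \<in> {p'..p' + len n}" using descendants_bounds[OF p'(2)] q(2) by auto
  then have "p' = p" using left_ends_far[OF p'(1) assms(2)] assms(3) by force
  then show ?thesis using p'(2) q(2) by blast
qed

lemma cantor_same_interval:
  assumes "p \<in> left_ends (Suc j)" "x \<in> {p..p + len (Suc j)}" "y \<in> cantor"
    and "\<bar>x - y\<bar> < gap_ratio * len j"
  shows "y \<in> {p..p + len (Suc j)}"
proof -
  obtain q where q: "q \<in> left_ends (Suc j)" "y \<in> {q..q + len (Suc j)}"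
    using cantor_level[OF assms(3)] by blast
  have "q = p"
  proof (rule ccontr)
    assume "q \<noteq> p"
    then have "len (Suc j) + gap_ratio * len j \<le> dist p q"
      using separated_left_ends[of j] assms(1) q(1) unfolding separated_def by metis
    moreover have "dist p q \<le> \<bar>x - y\<bar> + len (Suc j)"
      using assms(2) q(2) by (auto simp: dist_real_def abs_if)
    ultimately show False using assms(4) by linarith
  qed
  then show ?thesis using q(2) by simp
qed

lemma min_ratio_pow_le_len:
  assumes "\<And>i. n \<le> i \<Longrightarrow> i < n + w \<Longrightarrow> \<not> 2 ^ t dvd Suc i"
  shows "min_ratio t ^ w * len n \<le> len (n + w)"
  using assms
proof (induction w)
  case (Suc w)
  have "min_ratio t * (min_ratio t ^ w * len n) \<le> min_ratio t * len (n + w)"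
    using Suc min_ratio_pos[of t] by (intro mult_left_mono) auto
  also have "\<dots> \<le> len (Suc (n + w))" using Suc.prems[of "n + w"] by (intro min_ratio_le_len_Suc) auto
  finally show ?case by simp
qed simp

lemma obtain_dvd_order:
  assumes "0 < e"
  obtains t :: nat where "exp (- weight * (real t - 1) / a) \<le> e"
proof -
  obtain t :: nat where t: "1 + a * ln (1 / e) / weight \<le> real t" by (meson real_arch_simple)
  then have "a * ln (1 / e) \<le> weight * (real t - 1)" using weight_pos by (simp add: field_simps)
  then have "- weight * (real t - 1) / a \<le> ln e"
    using a_pos assms by (simp add: ln_div field_simps)
  then have "exp (- weight * (real t - 1) / a) \<le> e" using assms by (metis exp_le_cancel_iff exp_ln)
  then show ?thesis by (rule that)
qed

lemma obtain_gap_level: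
  assumes "1 \<le> M" "0 < s" "s \<le> 1" "exp (- weight * (real t - 1) / a) \<le> gap_ratio / M"
  obtains j where "M * len (Suc j) \<le> s" "M * len (Suc j) \<le> gap_ratio * len j"
    "min_ratio t ^ 2 ^ t * (s / M) \<le> len j"
proof -
  obtain n where n: "len (Suc n) \<le> s / M" "s / M \<le> len n"
    using obtain_len_bracket[of "s / M"] assms(1-3) by (auto simp: divide_le_eq)
  obtain j where j: "n \<le> j" "j < n + 2 ^ t" "2 ^ t dvd Suc j"
    "\<And>i. n \<le> i \<Longrightarrow> i < j \<Longrightarrow> \<not> 2 ^ t dvd Suc i"
    using obtain_next_Suc_multiple[of "2 ^ t" n] by auto
  show ?thesis
  proof
    have "len (Suc j) \<le> len (Suc n)" using j(1) by (intro len_antimono) simp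
    then have "M * len (Suc j) \<le> M * len (Suc n)" using assms(1) by (intro mult_left_mono) auto
    also have "\<dots> \<le> s" using n(1) assms(1) by (simp add: field_simps)
    finally show "M * len (Suc j) \<le> s" .
    have "len (Suc j) \<le> len j * (gap_ratio / M)"
      using len_Suc_le_if_dvd[OF j(3)] assms(4) len_pos[of j] by (meson mult_left_mono order_trans less_imp_le)
    then show "M * len (Suc j) \<le> gap_ratio * len j" using assms(1) by (simp add: field_simps)
    have "min_ratio t ^ 2 ^ t \<le> min_ratio t ^ (j - n)"
      using j(2) min_ratio_pos[of t] min_ratio_le_1[of t] by (intro power_decreasing) auto
    then have "min_ratio t ^ 2 ^ t * (s / M) \<le> min_ratio t ^ (j - n) * len n"
      using n(2) min_ratio_pos[of t] assms(1,2) by (intro mult_mono) auto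
    also have "\<dots> \<le> len j" using min_ratio_pow_le_len[of n "j - n" t] j(1,4) by simp
    finally show "min_ratio t ^ 2 ^ t * (s / M) \<le> len j" .
  qed
qed

definition cantor_cube :: "'b::euclidean_space set" where
  "cantor_cube = {x. \<forall>i\<in>Basis. x \<bullet> i \<in> cantor}"

lemma zero_mem_cantor_cube: "0 \<in> cantor_cube"
  using zero_mem_cantor by (simp add: cantor_cube_def)

lemma compact_cantor_cube: "compact (cantor_cube :: 'b::euclidean_space set)"
proof -
  have "cantor_cube = (\<Inter>i\<in>Basis. (\<lambda>x::'b. x \<bullet> i) -` cantor)"
    by (auto simp: cantor_cube_def)
  moreover have "closed ((\<lambda>x::'b. x \<bullet> i) -` cantor)" for i
    by (intro continuous_closed_vimage closed_cantor continuous_intros)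
  ultimately have "closed (cantor_cube :: 'b set)" by auto
  moreover have "norm x \<le> DIM('b)" if "x \<in> cantor_cube" for x :: 'b
    using norm_le_DIM_mult[of x 1] that cantor_subset_unit_interval unfolding cantor_cube_def by force
  then have "bounded (cantor_cube :: 'b set)" unfolding bounded_iff by blast
  ultimately show ?thesis by (simp add: compact_eq_bounded_closed)
qed

lemma cantor_cube_annulus:
  fixes x :: "'b::euclidean_space"
  assumes "x \<in> cantor_cube"
  shows "cantor_cube \<inter> annulus x (DIM('b) * len (Suc j)) (gap_ratio * len j) = {}"
proof -
  have "dist w x \<le> DIM('b) * len (Suc j)" if w: "w \<in> cantor_cube" "dist w x < gap_ratio * len j" for w
  proof -
    have "\<bar>(w - x) \<bullet> i\<bar> \<le> len (Suc j)" if i: "i \<in> Basis" for i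
    proof -
      obtain p where p: "p \<in> left_ends (Suc j)" "x \<bullet> i \<in> {p..p + len (Suc j)}"
        using cantor_level assms i unfolding cantor_cube_def by blast
      have "\<bar>x \<bullet> i - w \<bullet> i\<bar> < gap_ratio * len j"
        using Basis_le_norm[OF i, of "x - w"] w(2) by (simp add: dist_norm inner_diff_left norm_minus_commute)
      then have "w \<bullet> i \<in> {p..p + len (Suc j)}"
        using cantor_same_interval[OF p] w(1) i unfolding cantor_cube_def by blast
      then show ?thesis using p(2) by (auto simp: inner_diff_left abs_if)
    qed
    then show ?thesis unfolding dist_norm by (rule norm_le_DIM_mult)
  qed
  then show ?thesis by force
qed

lemma uniformly_annulus_porous_cantor_cube:
  "uniformly_annulus_porous (cantor_cube :: 'b::euclidean_space set)"
  unfolding uniformly_annulus_porous_def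
proof (intro allI impI)
  fix L :: real assume "2 \<le> L"
  define M where "M = L * DIM('b)"
  have "L * 1 \<le> L * DIM('b)" using \<open>2 \<le> L\<close> by (intro mult_left_mono) (auto simp: Suc_le_eq)
  then have M: "2 \<le> M" using \<open>2 \<le> L\<close> unfolding M_def by linarith
  obtain t where t: "exp (- weight * (real t - 1) / a) \<le> gap_ratio / M"
    using obtain_dvd_order[of "gap_ratio / M"] gap_ratio_pos M by auto
  define c where "c = gap_ratio * min_ratio t ^ 2 ^ t / M"
  have "gap_ratio * min_ratio t ^ 2 ^ t \<le> 1"
    using gap_ratio_pos gap_ratio_le_1 min_ratio_pos[of t] min_ratio_le_1[of t]
    by (intro mult_le_one power_le_one) auto
  then have c: "0 < c" "c \<le> 1"
    using gap_ratio_pos min_ratio_pos[of t] M by (auto simp: c_def divide_le_eq)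
  show "\<exists>c>0. \<forall>x\<in>(cantor_cube :: 'b set). \<forall>s. 0 < s \<and> s \<le> 1 \<longrightarrow>
      (\<exists>R. c * s \<le> R \<and> R \<le> s \<and> cantor_cube \<inter> annulus x (R / L) R = {})"
  proof (rule exI[of _ c], intro conjI c(1) ballI allI impI)
    fix x :: 'b and s :: real assume x: "x \<in> cantor_cube" and "0 < s \<and> s \<le> 1"
    then have s: "0 < s" "s \<le> 1" by auto
    obtain j where j: "M * len (Suc j) \<le> s" "M * len (Suc j) \<le> gap_ratio * len j"
      "min_ratio t ^ 2 ^ t * (s / M) \<le> len j"
      using obtain_gap_level[OF _ s t] M by (metis one_le_numeral order_trans)
    define R where "R = min s (gap_ratio * len j)"
    have "c * s = gap_ratio * (min_ratio t ^ 2 ^ t * (s / M))" by (simp add: c_def algebra_simps)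
    also have "\<dots> \<le> gap_ratio * len j" using j(3) gap_ratio_pos by (intro mult_left_mono) auto
    finally have "c * s \<le> gap_ratio * len j" .
    then have "c * s \<le> R" using c s by (simp add: R_def mult_le_cancel_right1)
    moreover have "DIM('b) * len (Suc j) * L \<le> R" using j(1,2) by (simp add: R_def M_def mult_ac)
    then have "DIM('b) * len (Suc j) \<le> R / L" using \<open>2 \<le> L\<close> by (simp add: le_divide_eq)
    then have "annulus x (R / L) R \<subseteq> annulus x (DIM('b) * len (Suc j)) (gap_ratio * len j)"
      by (intro annulus_mono) (auto simp: R_def)
    then have "cantor_cube \<inter> annulus x (R / L) R = {}" using cantor_cube_annulus[OF x] by blast
    ultimately show "\<exists>R. c * s \<le> R \<and> R \<le> s \<and> cantor_cube \<inter> annulus x (R / L) R = {}"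
      by (intro exI[of _ R]) (auto simp: R_def)
  qed
qed

definition cube_cell :: "nat \<Rightarrow> ('b::euclidean_space \<Rightarrow> real) \<Rightarrow> 'b set" where
  "cube_cell N p = {z. \<forall>i\<in>Basis. z \<bullet> i \<in> {p i..p i + len N}}"

lemma covnum_le_cantor_cell:
  fixes A :: "'b::euclidean_space set"
  assumes "\<And>i. i \<in> Basis \<Longrightarrow> p i \<in> left_ends N" "A \<subseteq> cantor_cube \<inter> cube_cell N p"
    and "DIM('b) * len (N + m) \<le> r"
  shows "covnum r A \<le> 2 ^ (m * DIM('b))"
proof -
  define Q where "Q = PiE (Basis :: 'b set) (\<lambda>i. descendants (p i) N m)"
  define centre where "centre f = (\<Sum>i\<in>Basis. (f i + len (N + m) / 2) *\<^sub>R i)" for f :: "'b \<Rightarrow> real"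
  have "finite Q" by (simp add: Q_def finite_PiE finite_descendants)
  have "card Q = (\<Prod>i\<in>(Basis :: 'b set). card (descendants (p i) N m))"
    by (simp add: Q_def card_PiE)
  also have "\<dots> \<le> (\<Prod>i\<in>(Basis :: 'b set). 2 ^ m)" by (intro prod_mono) (auto simp: card_descendants_le)
  finally have card_Q: "card Q \<le> 2 ^ (m * DIM('b))" by (simp add: power_mult)
  have "A \<subseteq> (\<Union>c\<in>centre ` Q. cball c (r/2))"
  proof
    fix z assume "z \<in> A"
    then have z: "z \<in> cantor_cube" "\<And>i. i \<in> Basis \<Longrightarrow> z \<bullet> i \<in> {p i..p i + len N}"
      using assms(2) by (auto simp: cube_cell_def)
    have "\<exists>q\<in>descendants (p i) N m. z \<bullet> i \<in> {q..q + len (N + m)}" if "i \<in> Basis" for i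
      using cantor_descendant[OF _ assms(1) z(2)] z(1) that unfolding cantor_cube_def by blast
    then obtain f where f: "\<And>i. i \<in> Basis \<Longrightarrow> f i \<in> descendants (p i) N m \<and> z \<bullet> i \<in> {f i..f i + len (N + m)}"
      by metis
    have "restrict f Basis \<in> Q" using f by (auto simp: Q_def)
    have "\<bar>(z - centre (restrict f Basis)) \<bullet> i\<bar> \<le> len (N + m) / 2" if "i \<in> Basis" for i
      using f[OF that] that by (auto simp: centre_def inner_diff_left abs_if)
    then have "dist z (centre (restrict f Basis)) \<le> DIM('b) * (len (N + m) / 2)"
      unfolding dist_norm by (rule norm_le_DIM_mult)
    then have "z \<in> cball (centre (restrict f Basis)) (r/2)"
      using assms(3) by (simp add: dist_commute)
    then show "z \<in> (\<Union>c\<in>centre ` Q. cball c (r/2))"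
      by (rule UN_I[OF imageI[OF \<open>restrict f Basis \<in> Q\<close>]])
  qed
  then have "covnum r A \<le> card (centre ` Q)"
    using \<open>finite Q\<close> by (intro covnum_le_card_half_radius) auto
  also have "\<dots> \<le> card Q" using \<open>finite Q\<close> by (rule card_image_le)
  finally show ?thesis using card_Q by linarith
qed

lemma cantor_cube_ball_subset_cell:
  fixes x :: "'b::euclidean_space"
  assumes "x \<in> cantor_cube" "N = 0 \<or> R < gap_ratio * len (N - 1)"
  obtains p where "\<And>i. i \<in> Basis \<Longrightarrow> p i \<in> left_ends N"
    "cball x R \<inter> cantor_cube \<subseteq> cube_cell N p"
proof (cases N)
  case 0
  then show ?thesis
    using cantor_subset_unit_interval by (intro that[of "\<lambda>_. 0"]) (auto simp: cantor_cube_def cube_cell_def)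
next
  case (Suc k)
  have "\<exists>q\<in>left_ends (Suc k). x \<bullet> i \<in> {q..q + len (Suc k)}" if "i \<in> Basis" for i
    using cantor_level assms(1) that unfolding cantor_cube_def by blast
  then obtain p where p: "\<And>i. i \<in> Basis \<Longrightarrow> p i \<in> left_ends (Suc k) \<and> x \<bullet> i \<in> {p i..p i + len (Suc k)}"
    by metis
  have "z \<bullet> i \<in> {p i..p i + len (Suc k)}"
    if "z \<in> cball x R \<inter> cantor_cube" "i \<in> Basis" for z i
  proof (rule cantor_same_interval)
    show "\<bar>x \<bullet> i - z \<bullet> i\<bar> < gap_ratio * len k"
      using Basis_le_norm[OF \<open>i \<in> Basis\<close>, of "x - z"] that(1) assms(2) Suc
      by (simp add: dist_norm inner_diff_left)
  qed (use p that in \<open>auto simp: cantor_cube_def\<close>)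
  then show ?thesis using p Suc by (intro that[of p]) (auto simp: cube_cell_def)
qed

lemma covnum_cantor_cube_ball:
  fixes x :: "'b::euclidean_space"
  assumes "x \<in> cantor_cube" "0 < r" "r \<le> R"
  obtains N w where "covnum r (cball x R \<inter> cantor_cube) \<le> 2 ^ (Suc w * DIM('b))"
    "len N / len (N + w) \<le> DIM('b) / gap_ratio * (R / r)"
proof -
  obtain N where N: "len N \<le> R / gap_ratio" "N = 0 \<or> R / gap_ratio < len (N - 1)"
    using obtain_first_len_le[of "R / gap_ratio" 0] assms gap_ratio_pos by auto
  obtain n where n: "N \<le> n" "len n \<le> r / DIM('b)" "n = N \<or> r / DIM('b) < len (n - 1)"
    using obtain_first_len_le[of "r / DIM('b)" N] assms(2) by auto
  have "N = 0 \<or> R < gap_ratio * len (N - 1)"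
    using N(2) gap_ratio_pos by (auto simp: divide_less_eq mult.commute)
  then obtain p where p: "\<And>i. i \<in> Basis \<Longrightarrow> p i \<in> left_ends N" "cball x R \<inter> cantor_cube \<subseteq> cube_cell N p"
    using cantor_cube_ball_subset_cell[OF assms(1)] by blast
  have "cball x R \<inter> cantor_cube \<subseteq> cantor_cube \<inter> cube_cell N p" using p(2) by blast
  then have cov: "covnum r (cball x R \<inter> cantor_cube) \<le> 2 ^ ((n - N) * DIM('b))"
    using n(1,2) by (intro covnum_le_cantor_cell[OF p(1)]) (simp_all add: field_simps)
  have "gap_ratio \<le> DIM('b)" using gap_ratio_le_1 by (simp add: Suc_le_eq order_trans)
  then have "1 * 1 \<le> DIM('b) / gap_ratio * (R / r)"
    using assms(2,3) gap_ratio_pos by (intro mult_mono) (auto simp: le_divide_eq)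
  then have ratio: "1 \<le> DIM('b) / gap_ratio * (R / r)" by simp
  show ?thesis
  proof (cases "n = N")
    case True
    have "covnum r (cball x R \<inter> cantor_cube) \<le> 1" using cov True by simp
    also have "(1::nat) \<le> 2 ^ (Suc 0 * DIM('b))" by simp
    finally show ?thesis using ratio len_pos[of N] by (intro that[of 0 N]) auto
  next
    case False
    define w where "w = n - N - 1"
    have w: "n = N + Suc w" using n(1) False by (simp add: w_def)
    then have "r / DIM('b) < len (N + w)" using n(3) False by simp
    then have "len N / len (N + w) \<le> (R / gap_ratio) / (r / DIM('b))"
      using N(1) assms(2,3) gap_ratio_pos by (intro frac_le) auto
    also have "\<dots> = DIM('b) / gap_ratio * (R / r)" by (simp add: field_simps)
    finally show ?thesis using cov w by (intro that[of w N]) auto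
  qed
qed

lemma card_le_covnum_cantor_cube:
  "2 ^ (Suc w * DIM('b)) \<le>
     covnum (gap_ratio * len (n + w) / 3) (cball 0 (DIM('b) * len n) \<inter> (cantor_cube :: 'b::euclidean_space set))"
proof -
  define Q where "Q = descendants 0 n (Suc w)"
  define G where "G = {x :: 'b. \<forall>i\<in>Basis. x \<bullet> i \<in> Q}"
  have "0 \<in> left_ends n" using left_ends_mono[of 0 n] by auto
  then have Q: "Q \<subseteq> left_ends (Suc (n + w))" "card Q = 2 ^ Suc w"
    using left_ends_add[of n "Suc w"] card_descendants[of 0 n "Suc w"] by (auto simp: Q_def)
  have "finite Q" by (simp add: Q_def finite_descendants)
  then have "finite G" "card G = 2 ^ (Suc w * DIM('b))"
    using finite_coordinates_in card_coordinates_in[of Q, where 'b='b] Q(2)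
    by (simp_all add: G_def power_add power_mult)
  moreover have "G \<subseteq> cball 0 (DIM('b) * len n) \<inter> cantor_cube"
  proof
    fix y assume y: "y \<in> G"
    have "\<bar>y \<bullet> i\<bar> \<le> len n" if "i \<in> Basis" for i
      using descendants_bounds[of "y \<bullet> i" 0 n "Suc w"] len_pos[of "n + Suc w"] y that
      by (auto simp: G_def Q_def)
    then have "norm y \<le> DIM('b) * len n" by (rule norm_le_DIM_mult)
    moreover have "y \<in> cantor_cube" using y Q(1) left_ends_subset_cantor by (auto simp: G_def cantor_cube_def)
    ultimately show "y \<in> cball 0 (DIM('b) * len n) \<inter> cantor_cube" by simp
  qed
  moreover have "separated (gap_ratio * len (n + w)) G"
    unfolding separated_def
  proof (intro ballI impI)
    fix y z assume yz: "y \<in> G" "z \<in> G" "y \<noteq> z"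
    then obtain i where i: "i \<in> Basis" "y \<bullet> i \<noteq> z \<bullet> i" using euclidean_eqI by blast
    then have "len (Suc (n + w)) + gap_ratio * len (n + w) \<le> dist (y \<bullet> i) (z \<bullet> i)"
      using separated_left_ends[of "n + w"] yz(1,2) Q(1) unfolding separated_def G_def by blast
    also have "\<dots> \<le> dist y z"
      using Basis_le_norm[OF i(1), of "y - z"] by (simp add: dist_norm dist_real_def inner_diff_left)
    finally show "gap_ratio * len (n + w) \<le> dist y z" using len_pos[of "Suc (n + w)"] by simp
  qed
  moreover have "2 * (gap_ratio * len (n + w) / 3) < gap_ratio * len (n + w)"
    using gap_ratio_pos len_pos[of "n + w"] by simp
  ultimately show ?thesis
    using gap_ratio_pos len_pos[of "n + w"]
    by (metis card_le_covnum compact_Int compact_cball compact_cantor_cube divide_pos_pos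
        mult_pos_pos zero_less_numeral)
qed

lemma len_ratio_powr_le_covnum:
  "(len n / len (n + w)) powr (a * DIM('b)) \<le> exp (weight * real (bitsum n)) ^ DIM('b) *
     covnum (gap_ratio * len (n + w) / 3) (cball 0 (DIM('b) * len n) \<inter> (cantor_cube :: 'b::euclidean_space set))"
proof -
  define X where "X = len n / len (n + w)"
  define E where "E = exp (weight * real (bitsum n))"
  have "0 < X" using len_pos by (simp add: X_def)
  have "X powr (a * DIM('b)) = (X powr a) ^ DIM('b)"
    using \<open>0 < X\<close> by (simp add: powr_power mult.commute)
  also have "\<dots> \<le> (E * 2 ^ w) ^ DIM('b)"
    using len_ratio_powr_le_two_pow[of n w] \<open>0 < X\<close> by (intro power_mono) (auto simp: X_def E_def)
  also have "\<dots> = E ^ DIM('b) * 2 ^ (w * DIM('b))"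
    by (simp add: power_mult_distrib power_mult)
  also have "\<dots> \<le> E ^ DIM('b) * 2 ^ (Suc w * DIM('b))"
    by (intro mult_left_mono power_increasing) (auto simp: E_def)
  also have "\<dots> \<le> E ^ DIM('b) *
      covnum (gap_ratio * len (n + w) / 3) (cball 0 (DIM('b) * len n) \<inter> (cantor_cube :: 'b set))"
    using card_le_covnum_cantor_cube[of w n, where 'b='b]
    by (intro mult_left_mono) (auto simp: E_def simp flip: of_nat_le_iff)
  finally show ?thesis by (simp add: X_def E_def)
qed

lemma assouad_exponent_cantor_cube:
  assumes "a * DIM('b) < \<beta>"
  shows "assouad_exponent (cantor_cube :: 'b::euclidean_space set) \<beta>"
proof -
  define \<gamma> where "\<gamma> = \<beta> / DIM('b) - a"
  have \<gamma>: "0 < \<gamma>" "(a + \<gamma>) * DIM('b) = \<beta>"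
    using assms by (simp_all add: \<gamma>_def field_simps)
  obtain K where K: "0 < K" "\<And>n w. 2 ^ w \<le> K * (len n / len (n + w)) powr (a + \<gamma>)"
    using two_pow_le_len_ratio_powr[OF \<gamma>(1)] by blast
  define C where "C = 2 ^ DIM('b) * K ^ DIM('b) * (DIM('b) / gap_ratio) powr \<beta>"
  have "real (covnum r (cball x R \<inter> cantor_cube)) \<le> C * (R / r) powr \<beta>"
    if rR: "0 < r" "r \<le> R" and x: "x \<in> (cantor_cube :: 'b set)" for r R x
  proof -
    obtain N w where cov: "covnum r (cball x R \<inter> cantor_cube) \<le> 2 ^ (Suc w * DIM('b))"
      and ratio: "len N / len (N + w) \<le> DIM('b) / gap_ratio * (R / r)"
      using covnum_cantor_cube_ball[OF x rR] by blast
    define X where "X = len N / len (N + w)"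
    have "0 < X" using len_pos by (simp add: X_def)
    have "(X powr (a + \<gamma>)) ^ DIM('b) = X powr (real DIM('b) * (a + \<gamma>))"
      using \<open>0 < X\<close> by (simp add: powr_power)
    then have XP: "(X powr (a + \<gamma>)) ^ DIM('b) = X powr \<beta>" using \<gamma>(2) by (simp add: mult.commute)
    have "real (covnum r (cball x R \<inter> cantor_cube)) \<le> 2 ^ (Suc w * DIM('b))"
      using cov by (metis of_nat_le_iff of_nat_numeral of_nat_power)
    also have "(2::real) ^ (Suc w * DIM('b)) = 2 ^ DIM('b) * (2 ^ w) ^ DIM('b)"
      by (simp add: power_add power_mult)
    also have "\<dots> \<le> 2 ^ DIM('b) * (K * X powr (a + \<gamma>)) ^ DIM('b)"
      using K(2)[of w N] by (intro mult_left_mono power_mono) (auto simp: X_def)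
    also have "\<dots> = 2 ^ DIM('b) * K ^ DIM('b) * X powr \<beta>"
      by (simp add: power_mult_distrib XP)
    also have "\<dots> \<le> 2 ^ DIM('b) * K ^ DIM('b) * (DIM('b) / gap_ratio * (R / r)) powr \<beta>"
      using ratio \<open>0 < X\<close> \<gamma> K(1) a_pos by (intro mult_left_mono powr_mono2) (auto simp: X_def)
    also have "\<dots> = C * (R / r) powr \<beta>" unfolding C_def powr_mult by (simp only: mult.assoc)
    finally show ?thesis .
  qed
  moreover have "0 < C" using K(1) gap_ratio_pos by (simp add: C_def)
  ultimately show ?thesis unfolding assouad_exponent_def by blast
qed

lemma len_ratio_powr_le_if_covnum_bound:
  assumes bound: "\<And>r R x. 0 < r \<Longrightarrow> r \<le> R \<Longrightarrow> R < 1 \<Longrightarrow> x \<in> (cantor_cube :: 'b::euclidean_space set) \<Longrightarrow>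
      real (covnum r (cball x R \<inter> cantor_cube)) \<le> C * (R / r) powr \<beta>"
    and n: "DIM('b) * len n < 1"
  shows "(len n / len (n + w)) powr (a * DIM('b)) \<le> exp (weight * real (bitsum n)) ^ DIM('b) * C *
      (3 * real DIM('b) / gap_ratio) powr \<beta> * (len n / len (n + w)) powr \<beta>"
proof -
  define X where "X = len n / len (n + w)"
  define E where "E = exp (weight * real (bitsum n))"
  have "gap_ratio * len (n + w) \<le> 1 * len (n + w)"
    using gap_ratio_le_1 len_pos[of "n + w"] by (intro mult_right_mono) auto
  also have "\<dots> \<le> 1 * len n" using len_antimono[of n "n + w"] by simp
  also have "\<dots> \<le> DIM('b) * len n" using len_pos[of n] by (intro mult_right_mono) (auto simp: Suc_le_eq)
  finally have "gap_ratio * len (n + w) \<le> DIM('b) * len n" .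
  moreover have "0 \<le> real DIM('b) * len n" using len_pos[of n] by simp
  ultimately have "gap_ratio * len (n + w) / 3 \<le> DIM('b) * len n" by linarith
  then have "real (covnum (gap_ratio * len (n + w) / 3) (cball 0 (DIM('b) * len n) \<inter> (cantor_cube :: 'b set)))
      \<le> C * ((DIM('b) * len n) / (gap_ratio * len (n + w) / 3)) powr \<beta>"
    using n gap_ratio_pos len_pos zero_mem_cantor_cube by (intro bound) auto
  also have "(DIM('b) * len n) / (gap_ratio * len (n + w) / 3) = 3 * real DIM('b) / gap_ratio * X"
    by (simp add: X_def field_simps)
  finally have cov: "real (covnum (gap_ratio * len (n + w) / 3) (cball 0 (DIM('b) * len n) \<inter> (cantor_cube :: 'b set)))
      \<le> C * (3 * real DIM('b) / gap_ratio * X) powr \<beta>" .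
  have "X powr (a * DIM('b)) \<le> E ^ DIM('b) *
      covnum (gap_ratio * len (n + w) / 3) (cball 0 (DIM('b) * len n) \<inter> (cantor_cube :: 'b set))"
    using len_ratio_powr_le_covnum[of n w, where 'b='b] by (simp add: X_def E_def)
  also have "\<dots> \<le> E ^ DIM('b) * (C * (3 * real DIM('b) / gap_ratio * X) powr \<beta>)"
    using cov by (intro mult_left_mono) (auto simp: E_def)
  also have "\<dots> = E ^ DIM('b) * C * (3 * real DIM('b) / gap_ratio) powr \<beta> * X powr \<beta>"
    unfolding powr_mult by (simp only: mult_ac)
  finally show ?thesis by (simp add: X_def E_def)
qed

lemma not_assouad_exponent_cantor_cube:
  assumes "\<beta> < a * DIM('b)"
  shows "\<not> assouad_exponent (cantor_cube :: 'b::euclidean_space set) \<beta>"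
proof
  assume "assouad_exponent (cantor_cube :: 'b set) \<beta>"
  then obtain C where C: "0 < C" and bound: "\<And>r R x. 0 < r \<Longrightarrow> r \<le> R \<Longrightarrow> R < 1 \<Longrightarrow>
      x \<in> (cantor_cube :: 'b set) \<Longrightarrow> real (covnum r (cball x R \<inter> cantor_cube)) \<le> C * (R / r) powr \<beta>"
    unfolding assouad_exponent_def by blast
  obtain n where "len n < 1 / DIM('b)" using obtain_len_less[of "1 / DIM('b)"] by auto
  then have n: "DIM('b) * len n < 1" by (simp add: field_simps)
  define \<gamma> where "\<gamma> = a * DIM('b) - \<beta>"
  define B where "B = exp (weight * real (bitsum n)) ^ DIM('b) * C * (3 * real DIM('b) / gap_ratio) powr \<beta>"
  have bounded: "(len n / len (n + w)) powr \<gamma> \<le> B" for w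
  proof -
    define X where "X = len n / len (n + w)"
    have "0 < X" using len_pos by (simp add: X_def)
    have "X powr \<beta> * X powr \<gamma> = X powr (a * DIM('b))" by (simp add: \<gamma>_def flip: powr_add)
    also have "\<dots> \<le> X powr \<beta> * B"
      using len_ratio_powr_le_if_covnum_bound[OF bound n, of w] by (simp add: X_def B_def mult.commute)
    finally have "X powr \<gamma> \<le> B" using \<open>0 < X\<close> by (simp add: mult_le_cancel_left_pos)
    then show ?thesis by (simp add: X_def)
  qed
  have "0 < \<gamma>" using assms by (simp add: \<gamma>_def)
  have "0 < B" using C gap_ratio_pos by (simp add: B_def)
  obtain w :: nat where "ln B / (decay * \<gamma>) < w" using reals_Archimedean2 by blast
  then have "ln B < decay * w * \<gamma>" using decay_pos \<open>0 < \<gamma>\<close> by (simp add: divide_less_eq mult_ac)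
  then have "B < exp (decay * w * \<gamma>)" using \<open>0 < B\<close> by (metis exp_less_cancel_iff exp_ln)
  also have "\<dots> = exp (decay * w) powr \<gamma>" by (simp add: exp_powr_real)
  also have "\<dots> \<le> (len n / len (n + w)) powr \<gamma>"
    using exp_decay_le_len_ratio \<open>0 < \<gamma>\<close> by (intro powr_mono2) auto
  finally show False using bounded[of w] by simp
qed

lemma assouad_dim_cantor_cube: "assouad_dim (cantor_cube :: 'b::euclidean_space set) = a * DIM('b)"
  using a_pos assouad_exponent_cantor_cube not_assouad_exponent_cantor_cube by (intro assouad_dim_eqI) auto

end

theorem theorem2p3:
  fixes \<alpha> :: real
  assumes "0 \<le> \<alpha>" and "\<alpha> < real DIM('a::euclidean_space)"
  shows "\<exists>K :: 'a set. compact K \<and> K \<noteq> {} \<and> assouad_dim K = \<alpha> \<and>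
           (\<forall>E \<in> microsets K. mod_lower_dim E = 0)"
proof (cases "\<alpha> = 0")
  case True
  have "assouad_dim {0::'a} = \<alpha>" "\<forall>E \<in> microsets {0::'a}. mod_lower_dim E = 0"
    using True assouad_dim_singleton mod_lower_dim_microset[OF uniformly_annulus_porous_singleton]
    by auto
  then show ?thesis by (intro exI[of _ "{0::'a}"]) auto
next
  case False
  define a where "a = \<alpha> / DIM('a)"
  have "0 < a" "a < 1" using assms False by (auto simp: a_def field_simps)
  then interpret cantor_scales a by unfold_locales
  have "assouad_dim (cantor_cube :: 'a set) = \<alpha>"
    using assouad_dim_cantor_cube[where 'b='a] by (simp add: a_def)
  moreover have "\<forall>E \<in> microsets (cantor_cube :: 'a set). mod_lower_dim E = 0"
    using mod_lower_dim_microset[OF uniformly_annulus_porous_cantor_cube] by blast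
  ultimately show ?thesis using compact_cantor_cube zero_mem_cantor_cube by blast
qed

end
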